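(* Let $(A_k,b_k,c_k)_{k\in\mathbb{Z}}$ and $(\tilde A_k,\tilde b_k,\tilde c_k)_{k\in\mathbb{Z}}$ (with $A_k,\tilde A_k\in\mathbb{R}^{n\times n}$, $b_k,\tilde b_k\in\mathbb{R}^{n\times1}$, $c_k,\tilde c_k\in\mathbb{R}^{1\times n}$) be algebraically equivalent via invertible matrices $\{T_k\}_{k\in\mathbb{Z}}$, i.e. $\tilde A_k=T_{k+1}A_kT_k^{-1}$, $\tilde b_k=T_{k+1}b_k$, $\tilde c_k=c_kT_k^{-1}$. Then for every $k\in\mathbb{Z}$, $\det(T_k)\,\tilde c_k\operatorname{adj}(\tilde A_k)\tilde b_k=\det(T_{k+1})\,c_k\operatorname{adj}(A_k)b_k$.
   Context: $\operatorname{adj}(A)$ denotes the adjugate of $A$ (the matrix with $A\operatorname{adj}(A)=\operatorname{adj}(A)A=\det(A)I$, whose $(j,i)$ entry is $(-1)^{i+j}$ times the $(i,j)$ minor). *)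

theory Defs
  imports "Jordan_Normal_Form.Determinant"
begin

end

theory Submission
  imports Defs
begin

(* Cramer's rule: the (k, j) entry of adj(PM) P is the determinant of PM with column k replaced
   by P e_j, which is P times M with column k replaced by e_j; so adj(PM) P = det P adj M for every
   square P, and by transposition Q adj(MQ) = det Q adj M.  Hence
   Tinv_k adj(T_{k+1} A_k Tinv_k) T_{k+1} = det T_{k+1} det Tinv_k adj A_k,
   and det T_k det Tinv_k = 1. *)

lemma row_adj_mat_scalar_prod:
  assumes A: "A \<in> carrier_mat n n" and v: "v \<in> carrier_vec n" and k: "k < n"
  shows "row (adj_mat A) k \<bullet> v = det (replace_col A v k)"
proof -
  have Av: "replace_col A v k \<in> carrier_mat n n" using A by (auto simp: replace_col_def)
  show ?thesis unfolding scalar_prod_def using v k A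
    by (subst laplace_expansion_column[OF Av k], auto intro!: sum.cong arg_cong[of _ _ det]
      arg_cong[of _ _ "\<lambda> x. _ * x"] eq_matI
      simp: replace_col_def adj_mat_def Matrix.row_def cofactor_def mat_delete_def ac_simps)
qed

lemma replace_col_mult:
  assumes P: "P \<in> carrier_mat n n" and M: "M \<in> carrier_mat n n"
    and v: "v \<in> carrier_vec n" and k: "k < n"
  shows "replace_col (P * M) (P *\<^sub>v v) k = P * replace_col M v k"
proof -
  have "col (replace_col M v k) j = (if j = k then v else col M j)" if "j < n" for j
    using that M v by (auto simp: replace_col_def)
  then show ?thesis using P M v k
    by (intro eq_matI) (auto simp: replace_col_def)
qed

lemma adj_mat_mult_mult_left:
  fixes P M :: "'a :: comm_ring_1 mat"
  assumes P: "P \<in> carrier_mat n n" and M: "M \<in> carrier_mat n n"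
  shows "adj_mat (P * M) * P = det P \<cdot>\<^sub>m adj_mat M"
proof (rule eq_matI)
  fix k j assume "k < dim_row (det P \<cdot>\<^sub>m adj_mat M)" "j < dim_col (det P \<cdot>\<^sub>m adj_mat M)"
  then have k: "k < n" and j: "j < n" using adj_mat(1)[OF M] by auto
  have PM: "P * M \<in> carrier_mat n n" using P M by simp
  have RM: "replace_col M (unit_vec n j) k \<in> carrier_mat n n" using M by (auto simp: replace_col_def)
  have "(adj_mat (P * M) * P) $$ (k, j) = row (adj_mat (P * M)) k \<bullet> (P *\<^sub>v unit_vec n j)"
    using adj_mat(1)[OF PM] P k j col_mult2[OF P one_carrier_mat j] by simp
  also have "\<dots> = det (P * replace_col M (unit_vec n j) k)"
    using row_adj_mat_scalar_prod[OF PM _ k] replace_col_mult[OF P M _ k] P by simp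
  also have "\<dots> = det P * det (replace_col M (unit_vec n j) k)"
    by (rule det_mult[OF P RM])
  also have "det (replace_col M (unit_vec n j) k) = adj_mat M $$ (k, j)"
    using row_adj_mat_scalar_prod[OF M _ k, of "unit_vec n j"] adj_mat(1)[OF M] k j by simp
  finally show "(adj_mat (P * M) * P) $$ (k, j) = (det P \<cdot>\<^sub>m adj_mat M) $$ (k, j)"
    using adj_mat(1)[OF M] k j by simp
qed (use adj_mat(1)[OF M] adj_mat(1)[OF mult_carrier_mat[OF P M]] P in auto)

lemma adj_mat_transpose:
  assumes A: "A \<in> carrier_mat n n"
  shows "adj_mat A\<^sup>T = (adj_mat A)\<^sup>T"
proof -
  have "mat_delete A\<^sup>T i j = (mat_delete A j i)\<^sup>T" for i j
    using A by (intro eq_matI) (auto simp: mat_delete_def)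
  moreover have "det (mat_delete A j i)\<^sup>T = det (mat_delete A j i)" for i j
    by (rule det_transpose) (use A in \<open>auto simp: mat_delete_def\<close>)
  ultimately show ?thesis using A
    by (intro eq_matI) (auto simp: adj_mat_def cofactor_def add.commute)
qed

lemma adj_mat_mult_mult_right:
  fixes Q M :: "'a :: comm_ring_1 mat"
  assumes Q: "Q \<in> carrier_mat n n" and M: "M \<in> carrier_mat n n"
  shows "Q * adj_mat (M * Q) = det Q \<cdot>\<^sub>m adj_mat M"
proof -
  have MQ: "M * Q \<in> carrier_mat n n" using M Q by simp
  have "(Q * adj_mat (M * Q))\<^sup>T = adj_mat (M * Q)\<^sup>T * Q\<^sup>T"
    using transpose_mult[OF Q adj_mat(1)[OF MQ]] adj_mat_transpose[OF MQ] by simp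
  also have "\<dots> = adj_mat (Q\<^sup>T * M\<^sup>T) * Q\<^sup>T"
    using transpose_mult[OF M Q] by simp
  also have "\<dots> = det Q \<cdot>\<^sub>m adj_mat M\<^sup>T"
    using adj_mat_mult_mult_left[of "Q\<^sup>T" n "M\<^sup>T"] det_transpose[OF Q] Q M by simp
  also have "\<dots> = (det Q \<cdot>\<^sub>m adj_mat M)\<^sup>T"
    using adj_mat_transpose[OF M] by auto
  finally show ?thesis by simp
qed

lemma adj_mat_mult_sandwich:
  fixes P A Q :: "'a :: comm_ring_1 mat"
  assumes P: "P \<in> carrier_mat n n" and A: "A \<in> carrier_mat n n" and Q: "Q \<in> carrier_mat n n"
  shows "Q * adj_mat (P * A * Q) * P = (det P * det Q) \<cdot>\<^sub>m adj_mat A"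
proof -
  have AQ: "A * Q \<in> carrier_mat n n" using A Q by simp
  have "Q * adj_mat (P * A * Q) * P = Q * (adj_mat (P * (A * Q)) * P)"
    using P A Q adj_mat(1)[OF mult_carrier_mat[OF P AQ]] by simp
  also have "\<dots> = det P \<cdot>\<^sub>m (Q * adj_mat (A * Q))"
    using adj_mat_mult_mult_left[OF P AQ] mult_smult_distrib[OF Q adj_mat(1)[OF AQ]] by simp
  also have "\<dots> = (det P * det Q) \<cdot>\<^sub>m adj_mat A"
    using adj_mat_mult_mult_right[OF Q A] by (intro eq_matI) auto
  finally show ?thesis .
qed

theorem claim10:
  fixes n :: nat
    and A At T Tinv :: "int \<Rightarrow> real mat"
    and b bt c ct :: "int \<Rightarrow> real mat"
  assumes A_dim: "\<And>k. A k \<in> carrier_mat n n"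
    and b_dim: "\<And>k. b k \<in> carrier_mat n 1"
    and c_dim: "\<And>k. c k \<in> carrier_mat 1 n"
    and T_dim: "\<And>k. T k \<in> carrier_mat n n"
    and Tinv_dim: "\<And>k. Tinv k \<in> carrier_mat n n"
    and T_inv1: "\<And>k. T k * Tinv k = 1\<^sub>m n"
    and T_inv2: "\<And>k. Tinv k * T k = 1\<^sub>m n"
    and At_def: "\<And>k. At k = T (k + 1) * A k * Tinv k"
    and bt_def: "\<And>k. bt k = T (k + 1) * b k"
    and ct_def: "\<And>k. ct k = c k * Tinv k"
  shows "\<forall>k. det (T k) \<cdot>\<^sub>m (ct k * adj_mat (At k) * bt k)
            = det (T (k + 1)) \<cdot>\<^sub>m (c k * adj_mat (A k) * b k)"
proof
  fix k
  let ?T' = "T (k + 1)" and ?Ti = "Tinv k"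
  have A: "A k \<in> carrier_mat n n" and b: "b k \<in> carrier_mat n 1" and c: "c k \<in> carrier_mat 1 n"
    and T': "?T' \<in> carrier_mat n n" and Ti: "?Ti \<in> carrier_mat n n"
    using assms by auto
  define M where "M = adj_mat (?T' * A k * ?Ti)"
  have M: "M \<in> carrier_mat n n"
    unfolding M_def using adj_mat(1) A T' Ti by (meson mult_carrier_mat)
  have cTiM: "c k * ?Ti * M \<in> carrier_mat 1 n" and TiM: "?Ti * M \<in> carrier_mat n n"
    using c Ti M by auto
  have "ct k * adj_mat (At k) * bt k = c k * ?Ti * M * (?T' * b k)"
    unfolding At_def bt_def ct_def M_def ..
  also have "\<dots> = c k * (?Ti * M * ?T') * b k"
    by (simp only: assoc_mult_mat[OF cTiM T' b, symmetric] assoc_mult_mat[OF c Ti M, symmetric]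
        assoc_mult_mat[OF c TiM T', symmetric])
  also have "\<dots> = c k * ((det ?T' * det ?Ti) \<cdot>\<^sub>m adj_mat (A k)) * b k"
    unfolding M_def adj_mat_mult_sandwich[OF T' A Ti] ..
  also have "\<dots> = (det ?T' * det ?Ti) \<cdot>\<^sub>m (c k * adj_mat (A k) * b k)"
    by (simp only: mult_smult_distrib[OF c adj_mat(1)[OF A]]
        mult_smult_assoc_mat[OF mult_carrier_mat[OF c adj_mat(1)[OF A]] b])
  finally have transformed:
    "ct k * adj_mat (At k) * bt k = (det ?T' * det ?Ti) \<cdot>\<^sub>m (c k * adj_mat (A k) * b k)" .
  have "det (T k) * det ?Ti = 1"
    using det_mult[OF T_dim[of k] Ti] T_inv1[of k] by simp
  then show "det (T k) \<cdot>\<^sub>m (ct k * adj_mat (At k) * bt k)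
            = det ?T' \<cdot>\<^sub>m (c k * adj_mat (A k) * b k)"
    unfolding transformed by (intro eq_matI) (auto simp: algebra_simps)
qed

end
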